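(* Let $\mathcal{C}_0$ be an $(n,k)$ linear code over $\mathrm{GF}(q^m)$ with generator matrix $\mathbf{G}_0$ and parity-check matrix $\mathbf{H}_0$, let $s\ge1$ and let $\mathbf{B}$ be an $s\times n$ matrix over $\mathrm{GF}(q)$. Then the $s$-th order $\mathbf{B}$-elementary extension $\mathcal{C}_s$ of $\mathcal{C}_0$ is an $(n+s,k+s)$ linear code over $\mathrm{GF}(q^m)$ with generator matrix $\mathbf{G}_s=\begin{pmatrix}\mathbf{G}_0&\mathbf{0}\\ \mathbf{B}&\mathbf{I}_s\end{pmatrix}$ and parity-check matrix $\mathbf{H}_s=\begin{pmatrix}\mathbf{H}_0&-\mathbf{H}_0\mathbf{B}^T\end{pmatrix}$.
   Context: An $(n,k)$ linear code over $\mathrm{GF}(q^m)$ is a $k$-dimensional subspace of $\mathrm{GF}(q^m)^n$; a generator matrix is a $k\times n$ matrix whose rows form a basis, and a parity-check matrix is an $(n-k)\times n$ matrix $\mathbf{H}$ of full rank with $\mathcal{C}=\{\mathbf{c}:\mathbf{H}\mathbf{c}^T=\mathbf{0}\}$. The $s$-th order $\mathbf{B}$-elementary extension of $\mathcal{C}_0$ is $\mathcal{C}_s=\{(c_0,\dots,c_{n+s-1})\in\mathrm{GF}(q^m)^{n+s}:(c_0,\dots,c_{n-1})-(c_n,\dots,c_{n+s-1})\mathbf{B}\in\mathcal{C}_0\}$. *)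

theory Defs
  imports "Jordan_Normal_Form.Matrix" "HOL-Library.Cardinality"
begin

definition row_space :: "'a::field mat \<Rightarrow> 'a vec set" where
  "row_space G = {transpose_mat G *\<^sub>v u | u. u \<in> carrier_vec (dim_row G)}"

definition rows_lin_indep :: "'a::field mat \<Rightarrow> bool" where
  "rows_lin_indep G \<longleftrightarrow>
     (\<forall>u \<in> carrier_vec (dim_row G). transpose_mat G *\<^sub>v u = 0\<^sub>v (dim_col G) \<longrightarrow> u = 0\<^sub>v (dim_row G))"

definition linear_code :: "nat \<Rightarrow> nat \<Rightarrow> 'a::field vec set \<Rightarrow> bool" where
  "linear_code n k C \<longleftrightarrow> C \<subseteq> carrier_vec n \<and>
     (\<exists>G \<in> carrier_mat k n. rows_lin_indep G \<and> row_space G = C)"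

definition is_generator_matrix :: "nat \<Rightarrow> nat \<Rightarrow> 'a::field mat \<Rightarrow> 'a vec set \<Rightarrow> bool" where
  "is_generator_matrix n k G C \<longleftrightarrow>
     G \<in> carrier_mat k n \<and> rows_lin_indep G \<and> row_space G = C"

definition is_parity_check_matrix :: "nat \<Rightarrow> nat \<Rightarrow> 'a::field mat \<Rightarrow> 'a vec set \<Rightarrow> bool" where
  "is_parity_check_matrix n k H C \<longleftrightarrow>
     H \<in> carrier_mat (n - k) n \<and> rows_lin_indep H \<and>
     C = {c \<in> carrier_vec n. H *\<^sub>v c = 0\<^sub>v (n - k)}"

definition append_cols :: "'a::zero mat \<Rightarrow> 'a mat \<Rightarrow> 'a mat" where
  "append_cols A B = four_block_mat A B (0\<^sub>m 0 (dim_col A)) (0\<^sub>m 0 (dim_col B))"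

definition elem_extension :: "nat \<Rightarrow> nat \<Rightarrow> 'a::field mat \<Rightarrow> 'a vec set \<Rightarrow> 'a vec set" where
  "elem_extension n s B C0 =
     {c \<in> carrier_vec (n + s). vec_first c n - transpose_mat B *\<^sub>v vec_last c s \<in> C0}"

text \<open>Elements of the prime-power subfield GF(q) inside a finite field of order q^m.\<close>
definition in_subfield_GF :: "nat \<Rightarrow> 'a::field \<Rightarrow> bool" where
  "in_subfield_GF q x \<longleftrightarrow> x ^ q = x"

end

theory Submission
  imports Defs
begin

text \<open>Write a word of length n + s as a @ d. It lies in the extension iff a - B^T d lies in C0.
  Hence the codewords are exactly (G0^T u + B^T d) @ d, which is the image of the message u @ d
  under the block generator matrix, and the block parity-check matrix sends a @ d to
  H0 (a - B^T d). Row independence of the generator comes from G0 and the identity block, that of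
  the parity-check matrix from its left block H0.\<close>

lemma vec_first_append [simp]: "a \<in> carrier_vec n \<Longrightarrow> vec_first (a @\<^sub>v d) n = a"
  by (auto simp: vec_first_def)

lemma vec_last_append [simp]:
  "a \<in> carrier_vec n \<Longrightarrow> d \<in> carrier_vec s \<Longrightarrow> vec_last (a @\<^sub>v d) s = d"
  by (auto simp: vec_last_def)

lemma add_diff_cancel_right_vec [simp]:
  "(v :: 'a::ab_group_add vec) \<in> carrier_vec n \<Longrightarrow> w \<in> carrier_vec n \<Longrightarrow> v + w - w = v"
  by (intro eq_vecI) auto

lemma diff_add_cancel_vec [simp]:
  "(v :: 'a::ab_group_add vec) \<in> carrier_vec n \<Longrightarrow> w \<in> carrier_vec n \<Longrightarrow> v - w + w = v"
  by (intro eq_vecI) auto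

lemma mult_mat_vec_zero [simp]: "A \<in> carrier_mat r c \<Longrightarrow> A *\<^sub>v 0\<^sub>v c = 0\<^sub>v r"
  by (intro eq_vecI) (auto simp: scalar_prod_def)

lemma append_in_elem_extension_iff:
  assumes "a \<in> carrier_vec n" and "d \<in> carrier_vec s"
  shows "a @\<^sub>v d \<in> elem_extension n s B C0 \<longleftrightarrow> a - transpose_mat B *\<^sub>v d \<in> C0"
  using assms by (simp add: elem_extension_def)

lemma row_space_carrier:
  assumes "G \<in> carrier_mat k n"
  shows "row_space G \<subseteq> carrier_vec n"
  using assms by (auto simp: row_space_def)

lemma linear_code_if_generator_matrix:
  "is_generator_matrix n k G C \<Longrightarrow> linear_code n k C"
  by (auto simp: linear_code_def is_generator_matrix_def dest: row_space_carrier)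

lemma transpose_extension_generator_mult_append:
  fixes G0 B :: "'a::field mat"
  assumes G0: "G0 \<in> carrier_mat k n" and B: "B \<in> carrier_mat s n"
    and u: "u \<in> carrier_vec k" and d: "d \<in> carrier_vec s"
  shows "transpose_mat (four_block_mat G0 (0\<^sub>m k s) B (1\<^sub>m s)) *\<^sub>v (u @\<^sub>v d)
    = (transpose_mat G0 *\<^sub>v u + transpose_mat B *\<^sub>v d) @\<^sub>v d"
proof -
  have "transpose_mat (four_block_mat G0 (0\<^sub>m k s) B (1\<^sub>m s))
      = four_block_mat (transpose_mat G0) (transpose_mat B) (0\<^sub>m s k) (1\<^sub>m s)"
    using transpose_four_block_mat[OF G0 _ B, of "0\<^sub>m k s" s "1\<^sub>m s"] by simp
  then show ?thesis
    using four_block_mat_mult_vec[of "transpose_mat G0" n k "transpose_mat B" s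
        "0\<^sub>m s k" s "1\<^sub>m s" u d] G0 B u d
    by auto
qed

lemma rows_lin_indep_extension_generator:
  fixes G0 B :: "'a::field mat"
  assumes G0: "G0 \<in> carrier_mat k n" and B: "B \<in> carrier_mat s n"
    and indep: "rows_lin_indep G0"
  shows "rows_lin_indep (four_block_mat G0 (0\<^sub>m k s) B (1\<^sub>m s))"
  unfolding rows_lin_indep_def
proof (intro ballI impI)
  let ?G = "four_block_mat G0 (0\<^sub>m k s) B (1\<^sub>m s)"
  fix w :: "'a vec" assume "w \<in> carrier_vec (dim_row ?G)"
  then have w: "w \<in> carrier_vec (k + s)" using G0 by simp
  define u d where "u = vec_first w k" and "d = vec_last w s"
  have u: "u \<in> carrier_vec k" and d: "d \<in> carrier_vec s" and w_split: "w = u @\<^sub>v d"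
    using w by (simp_all add: u_def d_def)
  have a: "transpose_mat G0 *\<^sub>v u + transpose_mat B *\<^sub>v d \<in> carrier_vec n"
    using G0 B u d by simp
  assume "transpose_mat ?G *\<^sub>v w = 0\<^sub>v (dim_col ?G)"
  then have "(transpose_mat G0 *\<^sub>v u + transpose_mat B *\<^sub>v d) @\<^sub>v d = 0\<^sub>v n @\<^sub>v 0\<^sub>v s"
    using transpose_extension_generator_mult_append[OF G0 B u d] w_split G0 by auto
  then have d0: "d = 0\<^sub>v s" and "transpose_mat G0 *\<^sub>v u + transpose_mat B *\<^sub>v d = 0\<^sub>v n"
    using append_vec_eq[OF a zero_carrier_vec] by blast+
  then have "transpose_mat G0 *\<^sub>v u = 0\<^sub>v n"
    using G0 B u by auto
  then have "u = 0\<^sub>v k"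
    using indep u G0 by (auto simp: rows_lin_indep_def)
  then show "w = 0\<^sub>v (dim_row ?G)"
    using w_split d0 G0 by auto
qed

lemma row_space_extension_generator:
  fixes G0 B :: "'a::field mat"
  assumes G0: "G0 \<in> carrier_mat k n" and B: "B \<in> carrier_mat s n"
  shows "row_space (four_block_mat G0 (0\<^sub>m k s) B (1\<^sub>m s))
    = elem_extension n s B (row_space G0)"
proof (intro equalityI subsetI)
  let ?G = "four_block_mat G0 (0\<^sub>m k s) B (1\<^sub>m s)"
  fix c :: "'a vec" assume "c \<in> row_space ?G"
  then obtain w where w: "w \<in> carrier_vec (k + s)" and c: "c = transpose_mat ?G *\<^sub>v w"
    using G0 by (auto simp: row_space_def)
  define u d where "u = vec_first w k" and "d = vec_last w s"
  have u: "u \<in> carrier_vec k" and d: "d \<in> carrier_vec s" and "w = u @\<^sub>v d"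
    using w by (simp_all add: u_def d_def)
  then have c_split: "c = (transpose_mat G0 *\<^sub>v u + transpose_mat B *\<^sub>v d) @\<^sub>v d"
    using c transpose_extension_generator_mult_append[OF G0 B] by simp
  have "transpose_mat G0 *\<^sub>v u \<in> row_space G0"
    using u G0 by (auto simp: row_space_def)
  moreover have "transpose_mat G0 *\<^sub>v u \<in> carrier_vec n" "transpose_mat B *\<^sub>v d \<in> carrier_vec n"
    using G0 B u d by simp_all
  ultimately show "c \<in> elem_extension n s B (row_space G0)"
    unfolding c_split using d by (simp add: append_in_elem_extension_iff)
next
  let ?G = "four_block_mat G0 (0\<^sub>m k s) B (1\<^sub>m s)"
  fix c assume c_ext: "c \<in> elem_extension n s B (row_space G0)"
  define a d where "a = vec_first c n" and "d = vec_last c s"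
  have c: "c = a @\<^sub>v d" and a: "a \<in> carrier_vec n" and d: "d \<in> carrier_vec s"
    using c_ext by (simp_all add: elem_extension_def a_def d_def)
  obtain u where u: "u \<in> carrier_vec k" and "transpose_mat G0 *\<^sub>v u = a - transpose_mat B *\<^sub>v d"
    using c_ext G0 by (auto simp: elem_extension_def row_space_def a_def d_def)
  then have "transpose_mat G0 *\<^sub>v u + transpose_mat B *\<^sub>v d = a"
    using a B d by simp
  then have "c = transpose_mat ?G *\<^sub>v (u @\<^sub>v d)"
    using transpose_extension_generator_mult_append[OF G0 B u d] c by simp
  moreover have "u @\<^sub>v d \<in> carrier_vec (dim_row ?G)"
    using u d G0 by simp
  ultimately show "c \<in> row_space ?G"
    unfolding row_space_def by blast
qed

lemma is_generator_matrix_elem_extension: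
  fixes G0 B :: "'a::field mat"
  assumes "is_generator_matrix n k G0 C0" and "B \<in> carrier_mat s n"
  shows "is_generator_matrix (n + s) (k + s)
    (four_block_mat G0 (0\<^sub>m k s) B (1\<^sub>m s)) (elem_extension n s B C0)"
proof -
  have "G0 \<in> carrier_mat k n" "rows_lin_indep G0" "C0 = row_space G0"
    using assms(1) by (auto simp: is_generator_matrix_def)
  then show ?thesis
    using rows_lin_indep_extension_generator[of G0 k n B s] row_space_extension_generator[of G0 k n B s]
      assms(2)
    by (simp add: is_generator_matrix_def)
qed

lemma append_cols_carrier [simp]:
  "A \<in> carrier_mat r n \<Longrightarrow> M \<in> carrier_mat r s \<Longrightarrow> append_cols A M \<in> carrier_mat r (n + s)"
  unfolding append_cols_def using four_block_carrier_mat[of A r n "0\<^sub>m 0 s" 0 s] by simp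

lemma append_cols_mult_append:
  fixes A M :: "'a::comm_ring mat"
  assumes "A \<in> carrier_mat r n" and "M \<in> carrier_mat r s"
    and "a \<in> carrier_vec n" and "d \<in> carrier_vec s"
  shows "append_cols A M *\<^sub>v (a @\<^sub>v d) = A *\<^sub>v a + M *\<^sub>v d"
  using assms unfolding append_cols_def
  by (subst four_block_mat_mult_vec[of _ r n _ s _ 0]) (auto intro: eq_vecI)

lemma transpose_append_cols_mult_vec:
  assumes A: "A \<in> carrier_mat r n" and M: "M \<in> carrier_mat r s"
    and u: "u \<in> carrier_vec r" and i: "i < n"
  shows "(transpose_mat (append_cols A M) *\<^sub>v u) $ i = (transpose_mat A *\<^sub>v u) $ i"
  using A M u i by (simp add: append_cols_def mult_mat_vec_def scalar_prod_def)

lemma rows_lin_indep_append_cols: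
  fixes A M :: "'a::field mat"
  assumes A: "A \<in> carrier_mat r n" and M: "M \<in> carrier_mat r s"
    and indep: "rows_lin_indep A"
  shows "rows_lin_indep (append_cols A M)"
  unfolding rows_lin_indep_def
proof (intro ballI impI)
  have AM: "append_cols A M \<in> carrier_mat r (n + s)"
    using A M by simp
  fix u :: "'a vec" assume "u \<in> carrier_vec (dim_row (append_cols A M))"
  then have u: "u \<in> carrier_vec r" using AM by simp
  assume zero: "transpose_mat (append_cols A M) *\<^sub>v u = 0\<^sub>v (dim_col (append_cols A M))"
  have "transpose_mat A *\<^sub>v u = 0\<^sub>v n"
  proof (rule eq_vecI)
    fix i assume "i < dim_vec (0\<^sub>v n :: 'a vec)"
    then have i: "i < n" by simp
    then have "(transpose_mat (append_cols A M) *\<^sub>v u) $ i = 0"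
      using zero AM by simp
    then show "(transpose_mat A *\<^sub>v u) $ i = 0\<^sub>v n $ i"
      using transpose_append_cols_mult_vec[OF A M u i] i by simp
  qed (use A in simp)
  then show "u = 0\<^sub>v (dim_row (append_cols A M))"
    using indep u A AM by (simp add: rows_lin_indep_def)
qed

lemma extension_parity_check_mult_append:
  fixes H0 B :: "'a::field mat"
  assumes H0: "H0 \<in> carrier_mat r n" and B: "B \<in> carrier_mat s n"
    and a: "a \<in> carrier_vec n" and d: "d \<in> carrier_vec s"
  shows "append_cols H0 (- (H0 * transpose_mat B)) *\<^sub>v (a @\<^sub>v d)
    = H0 *\<^sub>v (a - transpose_mat B *\<^sub>v d)"
proof -
  have "append_cols H0 (- (H0 * transpose_mat B)) *\<^sub>v (a @\<^sub>v d)
      = H0 *\<^sub>v a + - (H0 * transpose_mat B) *\<^sub>v d"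
    using H0 B a d by (simp add: append_cols_mult_append[of _ r n _ s])
  also have "- (H0 * transpose_mat B) *\<^sub>v d = - (H0 *\<^sub>v (transpose_mat B *\<^sub>v d))"
    using H0 B d by (simp add: assoc_mult_mat_vec)
  also have "H0 *\<^sub>v a + - (H0 *\<^sub>v (transpose_mat B *\<^sub>v d)) = H0 *\<^sub>v a - H0 *\<^sub>v (transpose_mat B *\<^sub>v d)"
    using H0 B a d by (simp add: minus_add_uminus_vec[of _ r])
  also have "\<dots> = H0 *\<^sub>v (a - transpose_mat B *\<^sub>v d)"
    using H0 B a d by (simp add: mult_minus_distrib_mat_vec)
  finally show ?thesis .
qed

lemma is_parity_check_matrix_elem_extension:
  fixes H0 B :: "'a::field mat"
  assumes par: "is_parity_check_matrix n k H0 C0" and B: "B \<in> carrier_mat s n"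
  shows "is_parity_check_matrix (n + s) (k + s)
    (append_cols H0 (- (H0 * transpose_mat B))) (elem_extension n s B C0)"
proof -
  let ?H = "append_cols H0 (- (H0 * transpose_mat B))"
  have H0: "H0 \<in> carrier_mat (n - k) n" and indep: "rows_lin_indep H0"
    and C0: "C0 = {c \<in> carrier_vec n. H0 *\<^sub>v c = 0\<^sub>v (n - k)}"
    using par by (auto simp: is_parity_check_matrix_def)
  have M: "- (H0 * transpose_mat B) \<in> carrier_mat (n - k) s"
    using H0 B by simp
  have "c \<in> elem_extension n s B C0 \<longleftrightarrow> ?H *\<^sub>v c = 0\<^sub>v (n - k)"
    if c: "c \<in> carrier_vec (n + s)" for c
  proof -
    define a d where "a = vec_first c n" and "d = vec_last c s"
    have a: "a \<in> carrier_vec n" and d: "d \<in> carrier_vec s" and "c = a @\<^sub>v d"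
      using c by (simp_all add: a_def d_def)
    then show ?thesis
      using H0 B
      by (simp add: append_in_elem_extension_iff C0 extension_parity_check_mult_append)
  qed
  then have "elem_extension n s B C0 = {c \<in> carrier_vec (n + s). ?H *\<^sub>v c = 0\<^sub>v (n + s - (k + s))}"
    by (auto simp: elem_extension_def)
  then show ?thesis
    using H0 M indep rows_lin_indep_append_cols[OF H0 M]
    by (simp add: is_parity_check_matrix_def)
qed

text \<open>Only the shapes of G0, H0 and B matter.\<close>

theorem lemma6:
  fixes C0 :: "'a::{field,finite} vec set"
    and G0 H0 B :: "'a mat"
    and q m n k s :: nat
  assumes field_order: "CARD('a) = q ^ m" and "q > 1" and "m \<ge> 1"
    and code: "linear_code n k C0"
    and gen: "is_generator_matrix n k G0 C0"
    and par: "is_parity_check_matrix n k H0 C0"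
    and s: "s \<ge> 1"
    and B: "B \<in> carrier_mat s n"
    and B_GFq: "\<forall>i < s. \<forall>j < n. in_subfield_GF q (B $$ (i, j))"
  shows "linear_code (n + s) (k + s) (elem_extension n s B C0)
    \<and> is_generator_matrix (n + s) (k + s)
        (four_block_mat G0 (0\<^sub>m k s) B (1\<^sub>m s)) (elem_extension n s B C0)
    \<and> is_parity_check_matrix (n + s) (k + s)
        (append_cols H0 (- (H0 * transpose_mat B))) (elem_extension n s B C0)"
  using is_generator_matrix_elem_extension[OF gen B] is_parity_check_matrix_elem_extension[OF par B]
    linear_code_if_generator_matrix
  by blast

end
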